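(* An own-peak-only rule $\varphi$ on $\mathcal{E}_{\mathcal{SP}}$ is simple if and only if for each economy $(R,\Omega)\in\mathcal{E}_{\mathcal{SP}}$: (i) $\varphi_i(R,\Omega)=p(R_i)$ for every $i\in N^+(R,\Omega)$, and (ii) for every $i\in N^-(R,\Omega)$, $\varphi_i(R,\Omega)$ lies between $\frac{\Omega}{n}$ and $p(R_i)$ (i.e., in the closed interval with these endpoints).
   Context: Let $N=\{1,\dots,n\}$ be a finite set of agents. A preference $R_i$ is a continuous complete preorder on $\mathbb{R}_+\cup\{\infty\}$; its peak $p(R_i)$ is the set of maximal elements. $R_i$ is single-peaked if $p(R_i)$ is a singleton (identified with its element) and for $x,x'\in\mathbb{R}_+$, $x$ is strictly preferred to $x'$ whenever $x'<x\le p(R_i)$ or $p(R_i)\le x<x'$; $\mathcal{SP}$ is the set of these. An economy is $(R,\Omega)$, $R\in\mathcal{SP}^n$, $\Omega>0$; $\mathcal{E}_{\mathcal{SP}}$ is the set of economies; a rule is a map $\varphi:\mathcal{E}_{\mathcal{SP}}\to\mathbb{R}^n_+$ with $\sum_j\varphi_j(R,\Omega)=\Omega$. Own-peak-only: $p(R_i')=p(R_i)$ implies $\varphi_i(R,\Omega)=\varphi_i(R_i',R_{-i},\Omega)$. Let $z(R,\Omega)=\sum_jp(R_j)-\Omega$. Agent $i$ is simple if ($z\ge0$ and $p(R_i)<\Omega/n$) or ($z\le0$ and $p(R_i)>\Omega/n$); $N^+(R,\Omega)$ is the set of simple agents and $N^-(R,\Omega)=N\setminus N^+(R,\Omega)$;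 $E(R,\Omega)=\left|\Omega-\left(\sum_{j\in N^+}p(R_j)+|N^-|\frac{\Omega}{n}\right)\right|$. An own-peak-only rule $\varphi$ is simple if for every economy and $i$: $\varphi_i=p(R_i)$ for $i\in N^+$; $\varphi_i=\frac{\Omega}{n}+\nu_i$ for $i\in N^-$ when $z\ge0$; $\varphi_i=\frac{\Omega}{n}-\nu_i$ for $i\in N^-$ when $z\le0$; where $0\le\nu_i\le|p(R_i)-\frac{\Omega}{n}|$ and $\sum_{j\in N^-}\nu_j=E(R,\Omega)$. *)

theory Defs
  imports "HOL-Analysis.Analysis"
begin

text \<open>Consumption space R+ \<union> {\<infinity>}, modelled inside the extended reals.\<close>
definition cspace :: "ereal set" where
  "cspace = {x. 0 \<le> x \<and> x \<noteq> -\<infinity>}"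

type_synonym pref = "ereal \<Rightarrow> ereal \<Rightarrow> bool"
  (* R x y : x is at least as good as y *)

definition strict :: "pref \<Rightarrow> ereal \<Rightarrow> ereal \<Rightarrow> bool" where
  "strict R x y \<longleftrightarrow> R x y \<and> \<not> R y x"

definition is_pref :: "pref \<Rightarrow> bool" where
  "is_pref R \<longleftrightarrow>
     (\<forall>x\<in>cspace. R x x) \<and>
     (\<forall>x\<in>cspace. \<forall>y\<in>cspace. \<forall>w\<in>cspace. R x y \<longrightarrow> R y w \<longrightarrow> R x w) \<and>
     (\<forall>x\<in>cspace. \<forall>y\<in>cspace. R x y \<or> R y x) \<and>
     (\<forall>x\<in>cspace. closed {y\<in>cspace. R y x} \<and> closed {y\<in>cspace. R x y})"

definition peak :: "pref \<Rightarrow> ereal set" where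
  "peak R = {x\<in>cspace. \<forall>y\<in>cspace. R x y}"

definition pk :: "pref \<Rightarrow> ereal" where
  "pk R = the_elem (peak R)"

definition single_peaked :: "pref \<Rightarrow> bool" where
  "single_peaked R \<longleftrightarrow> is_pref R \<and> (\<exists>p. peak R = {p}) \<and>
     (\<forall>x x'::real. 0 \<le> x \<longrightarrow> 0 \<le> x' \<longrightarrow>
        ((x' < x \<and> ereal x \<le> pk R) \<or> (pk R \<le> ereal x \<and> x < x'))
        \<longrightarrow> strict R (ereal x) (ereal x'))"

text \<open>Agents are the elements of a finite type 'n; n = CARD('n).\<close>
definition economy :: "('n::finite \<Rightarrow> pref) \<Rightarrow> real \<Rightarrow> bool" where
  "economy R \<Omega> \<longleftrightarrow> \<Omega> > 0 \<and> (\<forall>i. single_peaked (R i))"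

definition is_rule :: "(('n::finite \<Rightarrow> pref) \<Rightarrow> real \<Rightarrow> 'n \<Rightarrow> real) \<Rightarrow> bool" where
  "is_rule \<phi> \<longleftrightarrow> (\<forall>R \<Omega>. economy R \<Omega> \<longrightarrow>
      (\<forall>i. 0 \<le> \<phi> R \<Omega> i) \<and> (\<Sum>j\<in>UNIV. \<phi> R \<Omega> j) = \<Omega>)"

definition own_peak_only :: "(('n::finite \<Rightarrow> pref) \<Rightarrow> real \<Rightarrow> 'n \<Rightarrow> real) \<Rightarrow> bool" where
  "own_peak_only \<phi> \<longleftrightarrow> (\<forall>R \<Omega> i R'. economy R \<Omega> \<longrightarrow> single_peaked R' \<longrightarrow>
      pk R' = pk (R i) \<longrightarrow> \<phi> R \<Omega> i = \<phi> (R(i := R')) \<Omega> i)"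

definition share :: "real \<Rightarrow> 'n::finite itself \<Rightarrow> real" where
  "share \<Omega> _ = \<Omega> / real CARD('n)"

definition zexc :: "('n::finite \<Rightarrow> pref) \<Rightarrow> real \<Rightarrow> ereal" where
  "zexc R \<Omega> = (\<Sum>j\<in>UNIV. pk (R j)) - ereal \<Omega>"

definition simple_agent :: "('n::finite \<Rightarrow> pref) \<Rightarrow> real \<Rightarrow> 'n \<Rightarrow> bool" where
  "simple_agent R \<Omega> i \<longleftrightarrow>
     (zexc R \<Omega> \<ge> 0 \<and> pk (R i) < ereal (share \<Omega> TYPE('n))) \<or>
     (zexc R \<Omega> \<le> 0 \<and> pk (R i) > ereal (share \<Omega> TYPE('n)))"

definition Nplus :: "('n::finite \<Rightarrow> pref) \<Rightarrow> real \<Rightarrow> 'n set" where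
  "Nplus R \<Omega> = {i. simple_agent R \<Omega> i}"

definition Nminus :: "('n::finite \<Rightarrow> pref) \<Rightarrow> real \<Rightarrow> 'n set" where
  "Nminus R \<Omega> = UNIV - Nplus R \<Omega>"

definition Eexc :: "('n::finite \<Rightarrow> pref) \<Rightarrow> real \<Rightarrow> ereal" where
  "Eexc R \<Omega> = \<bar>ereal \<Omega> - ((\<Sum>j\<in>Nplus R \<Omega>. pk (R j))
        + ereal (real (card (Nminus R \<Omega>)) * share \<Omega> TYPE('n)))\<bar>"

definition simple_rule :: "(('n::finite \<Rightarrow> pref) \<Rightarrow> real \<Rightarrow> 'n \<Rightarrow> real) \<Rightarrow> bool" where
  "simple_rule \<phi> \<longleftrightarrow> own_peak_only \<phi> \<and>
    (\<forall>R \<Omega>. economy R \<Omega> \<longrightarrow> (\<exists>\<nu>::'n \<Rightarrow> real.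
       (\<forall>i\<in>Nplus R \<Omega>. ereal (\<phi> R \<Omega> i) = pk (R i)) \<and>
       (zexc R \<Omega> \<ge> 0 \<longrightarrow> (\<forall>i\<in>Nminus R \<Omega>. \<phi> R \<Omega> i = share \<Omega> TYPE('n) + \<nu> i)) \<and>
       (zexc R \<Omega> \<le> 0 \<longrightarrow> (\<forall>i\<in>Nminus R \<Omega>. \<phi> R \<Omega> i = share \<Omega> TYPE('n) - \<nu> i)) \<and>
       (\<forall>i\<in>Nminus R \<Omega>. 0 \<le> \<nu> i \<and>
           ereal (\<nu> i) \<le> \<bar>pk (R i) - ereal (share \<Omega> TYPE('n))\<bar>) \<and>
       ereal (\<Sum>j\<in>Nminus R \<Omega>. \<nu> j) = Eexc R \<Omega>))"

end

theory Submission
  imports Defs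
begin

text \<open>A non-simple agent's peak lies at or above \<open>\<Omega>/n\<close> when \<open>z \<ge> 0\<close> and at or below it
  when \<open>z \<le> 0\<close>, so lying between \<open>\<Omega>/n\<close> and the peak is the same as being \<open>\<Omega>/n + \<nu>\<close>,
  resp. \<open>\<Omega>/n - \<nu>\<close>, with \<open>0 \<le> \<nu> \<le> |p - \<Omega>/n|\<close>. Conversely, with \<open>\<nu>\<^sub>i = |\<phi>\<^sub>i - \<Omega>/n|\<close>
  the budget identity yields \<open>\<Sum>\<^sub>N\<^sub>- \<nu> = E\<close>, because all non-simple agents deviate from
  \<open>\<Omega>/n\<close> in the same direction.\<close>

definition simple_deviation ::
    "(('n::finite \<Rightarrow> pref) \<Rightarrow> real \<Rightarrow> 'n \<Rightarrow> real) \<Rightarrow> ('n \<Rightarrow> pref) \<Rightarrow> real \<Rightarrow> ('n \<Rightarrow> real) \<Rightarrow> bool"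
  where "simple_deviation \<phi> R \<Omega> \<nu> \<longleftrightarrow>
    (\<forall>i\<in>Nplus R \<Omega>. ereal (\<phi> R \<Omega> i) = pk (R i)) \<and>
    (zexc R \<Omega> \<ge> 0 \<longrightarrow> (\<forall>i\<in>Nminus R \<Omega>. \<phi> R \<Omega> i = share \<Omega> TYPE('n) + \<nu> i)) \<and>
    (zexc R \<Omega> \<le> 0 \<longrightarrow> (\<forall>i\<in>Nminus R \<Omega>. \<phi> R \<Omega> i = share \<Omega> TYPE('n) - \<nu> i)) \<and>
    (\<forall>i\<in>Nminus R \<Omega>. 0 \<le> \<nu> i \<and> ereal (\<nu> i) \<le> \<bar>pk (R i) - ereal (share \<Omega> TYPE('n))\<bar>) \<and>
    ereal (\<Sum>j\<in>Nminus R \<Omega>. \<nu> j) = Eexc R \<Omega>"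

lemma simple_rule_iff_deviation:
  "simple_rule \<phi> \<longleftrightarrow>
    own_peak_only \<phi> \<and> (\<forall>R \<Omega>. economy R \<Omega> \<longrightarrow> (\<exists>\<nu>. simple_deviation \<phi> R \<Omega> \<nu>))"
  unfolding simple_rule_def simple_deviation_def ..

lemma Nminus_share_le_peak:
  fixes R :: "'n::finite \<Rightarrow> pref"
  assumes "i \<in> Nminus R \<Omega>" "zexc R \<Omega> \<ge> 0"
  shows "ereal (share \<Omega> TYPE('n)) \<le> pk (R i)"
  using assms by (auto simp: Nminus_def Nplus_def simple_agent_def not_less)

lemma Nminus_peak_le_share:
  fixes R :: "'n::finite \<Rightarrow> pref"
  assumes "i \<in> Nminus R \<Omega>" "zexc R \<Omega> \<le> 0"
  shows "pk (R i) \<le> ereal (share \<Omega> TYPE('n))"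
  using assms by (auto simp: Nminus_def Nplus_def simple_agent_def not_less)

lemma ereal_between_iff_above:
  fixes s x :: real and p :: ereal
  assumes "ereal s \<le> p"
  shows "min (ereal s) p \<le> ereal x \<and> ereal x \<le> max (ereal s) p \<longleftrightarrow>
    0 \<le> x - s \<and> ereal (x - s) \<le> \<bar>p - ereal s\<bar>"
  using assms by (cases p) (auto simp: min_def max_def)

lemma ereal_between_iff_below:
  fixes s x :: real and p :: ereal
  assumes "p \<le> ereal s"
  shows "min (ereal s) p \<le> ereal x \<and> ereal x \<le> max (ereal s) p \<longleftrightarrow>
    0 \<le> s - x \<and> ereal (s - x) \<le> \<bar>p - ereal s\<bar>"
  using assms by (cases p) (auto simp: min_def max_def)

lemma Nminus_between_share_peak:
  fixes R :: "'n::finite \<Rightarrow> pref" and \<Omega> x :: real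
  defines "s \<equiv> share \<Omega> TYPE('n)"
  assumes i: "i \<in> Nminus R \<Omega>"
    and between: "min (ereal s) (pk (R i)) \<le> ereal x \<and> ereal x \<le> max (ereal s) (pk (R i))"
  shows "(zexc R \<Omega> \<ge> 0 \<longrightarrow> s \<le> x) \<and> (zexc R \<Omega> \<le> 0 \<longrightarrow> x \<le> s) \<and>
    ereal \<bar>x - s\<bar> \<le> \<bar>pk (R i) - ereal s\<bar>"
proof (cases "zexc R \<Omega> \<ge> 0")
  case True
  with between have "0 \<le> x - s" "ereal (x - s) \<le> \<bar>pk (R i) - ereal s\<bar>"
    using ereal_between_iff_above[OF Nminus_share_le_peak[OF i True]] by (simp_all add: s_def)
  moreover have "x \<le> s" if "zexc R \<Omega> \<le> 0"
    using between ereal_between_iff_below[OF Nminus_peak_le_share[OF i that]] by (simp add: s_def)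
  ultimately show ?thesis by simp
next
  case False
  then have nonpos: "zexc R \<Omega> \<le> 0" by simp
  with between have "0 \<le> s - x" "ereal (s - x) \<le> \<bar>pk (R i) - ereal s\<bar>"
    using ereal_between_iff_below[OF Nminus_peak_le_share[OF i nonpos]] by (simp_all add: s_def)
  with False show ?thesis by (simp add: abs_minus_commute)
qed

lemma abs_sum_eq_sum_abs_if_same_sign:
  fixes g :: "'a \<Rightarrow> real"
  assumes "(\<forall>j\<in>A. 0 \<le> g j) \<or> (\<forall>j\<in>A. g j \<le> 0)"
  shows "\<bar>\<Sum>j\<in>A. g j\<bar> = (\<Sum>j\<in>A. \<bar>g j\<bar>)"
proof (cases "\<forall>j\<in>A. 0 \<le> g j")
  case True
  then show ?thesis by (simp add: sum_nonneg)
next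
  case False
  with assms have nonpos: "\<forall>j\<in>A. g j \<le> 0" by blast
  then have "(\<Sum>j\<in>A. \<bar>g j\<bar>) = (\<Sum>j\<in>A. - g j)"
    by (intro sum.cong) auto
  with nonpos show ?thesis
    by (simp add: sum_negf sum_nonpos)
qed

lemma Eexc_eq_abs_sum_deviation:
  fixes R :: "'n::finite \<Rightarrow> pref" and f :: "'n \<Rightarrow> real"
  assumes budget: "(\<Sum>j\<in>UNIV. f j) = \<Omega>"
    and peaks: "\<forall>i\<in>Nplus R \<Omega>. ereal (f i) = pk (R i)"
  shows "Eexc R \<Omega> = ereal \<bar>\<Sum>j\<in>Nminus R \<Omega>. f j - share \<Omega> TYPE('n)\<bar>"
proof -
  let ?s = "share \<Omega> TYPE('n)"
  have "(\<Sum>j\<in>UNIV. f j) = (\<Sum>j\<in>Nplus R \<Omega>. f j) + (\<Sum>j\<in>Nminus R \<Omega>. f j)"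
    unfolding Nminus_def by (simp add: sum.subset_diff[of "Nplus R \<Omega>" UNIV])
  then have "(\<Sum>j\<in>Nminus R \<Omega>. f j - ?s) =
      \<Omega> - ((\<Sum>j\<in>Nplus R \<Omega>. f j) + real (card (Nminus R \<Omega>)) * ?s)"
    using budget by (simp add: sum_subtractf)
  moreover have "(\<Sum>j\<in>Nplus R \<Omega>. pk (R j)) = ereal (\<Sum>j\<in>Nplus R \<Omega>. f j)"
    using peaks by (simp add: sum_ereal[symmetric])
  ultimately show ?thesis
    unfolding Eexc_def by simp
qed

lemma simple_rule_bounds:
  fixes \<phi> :: "('n::finite \<Rightarrow> pref) \<Rightarrow> real \<Rightarrow> 'n \<Rightarrow> real"
  assumes "simple_rule \<phi>" "economy R \<Omega>"
  shows "(\<forall>i\<in>Nplus R \<Omega>. ereal (\<phi> R \<Omega> i) = pk (R i)) \<and>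
    (\<forall>i\<in>Nminus R \<Omega>.
       min (ereal (share \<Omega> TYPE('n))) (pk (R i)) \<le> ereal (\<phi> R \<Omega> i) \<and>
       ereal (\<phi> R \<Omega> i) \<le> max (ereal (share \<Omega> TYPE('n))) (pk (R i)))"
proof -
  let ?s = "share \<Omega> TYPE('n)"
  obtain \<nu> where "simple_deviation \<phi> R \<Omega> \<nu>"
    using assms by (auto simp: simple_rule_iff_deviation)
  then have peaks: "\<forall>i\<in>Nplus R \<Omega>. ereal (\<phi> R \<Omega> i) = pk (R i)"
    and up: "zexc R \<Omega> \<ge> 0 \<longrightarrow> (\<forall>i\<in>Nminus R \<Omega>. \<phi> R \<Omega> i = ?s + \<nu> i)"
    and down: "zexc R \<Omega> \<le> 0 \<longrightarrow> (\<forall>i\<in>Nminus R \<Omega>. \<phi> R \<Omega> i = ?s - \<nu> i)"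
    and \<nu>_bounds: "\<forall>i\<in>Nminus R \<Omega>. 0 \<le> \<nu> i \<and> ereal (\<nu> i) \<le> \<bar>pk (R i) - ereal ?s\<bar>"
    by (simp_all add: simple_deviation_def)
  have "min (ereal ?s) (pk (R i)) \<le> ereal (\<phi> R \<Omega> i) \<and>
      ereal (\<phi> R \<Omega> i) \<le> max (ereal ?s) (pk (R i))" if i: "i \<in> Nminus R \<Omega>" for i
  proof (cases "zexc R \<Omega> \<ge> 0")
    case True
    have "\<phi> R \<Omega> i - ?s = \<nu> i"
      using up True i by simp
    then show ?thesis
      unfolding ereal_between_iff_above[OF Nminus_share_le_peak[OF i True]] using \<nu>_bounds i by simp
  next
    case False
    then have nonpos: "zexc R \<Omega> \<le> 0" by simp
    have "?s - \<phi> R \<Omega> i = \<nu> i"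
      using down nonpos i by simp
    then show ?thesis
      unfolding ereal_between_iff_below[OF Nminus_peak_le_share[OF i nonpos]] using \<nu>_bounds i by simp
  qed
  with peaks show ?thesis by blast
qed

lemma simple_ruleI:
  fixes \<phi> :: "('n::finite \<Rightarrow> pref) \<Rightarrow> real \<Rightarrow> 'n \<Rightarrow> real"
  assumes rule: "is_rule \<phi>" and opo: "own_peak_only \<phi>"
    and bounds: "\<And>(R :: 'n \<Rightarrow> pref) \<Omega>. economy R \<Omega> \<Longrightarrow>
      (\<forall>i\<in>Nplus R \<Omega>. ereal (\<phi> R \<Omega> i) = pk (R i)) \<and>
      (\<forall>i\<in>Nminus R \<Omega>.
         min (ereal (share \<Omega> TYPE('n))) (pk (R i)) \<le> ereal (\<phi> R \<Omega> i) \<and>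
         ereal (\<phi> R \<Omega> i) \<le> max (ereal (share \<Omega> TYPE('n))) (pk (R i)))"
  shows "simple_rule \<phi>"
  unfolding simple_rule_iff_deviation
proof (intro conjI opo allI impI)
  fix R :: "'n \<Rightarrow> pref" and \<Omega> assume econ: "economy R \<Omega>"
  let ?s = "share \<Omega> TYPE('n)" and ?f = "\<phi> R \<Omega>"
  define \<nu> where "\<nu> i = \<bar>?f i - ?s\<bar>" for i
  have peaks: "\<forall>i\<in>Nplus R \<Omega>. ereal (?f i) = pk (R i)"
    and between: "\<forall>i\<in>Nminus R \<Omega>. min (ereal ?s) (pk (R i)) \<le> ereal (?f i) \<and>
        ereal (?f i) \<le> max (ereal ?s) (pk (R i))"
    using bounds[OF econ] by blast+
  have deviation: "(zexc R \<Omega> \<ge> 0 \<longrightarrow> ?s \<le> ?f i) \<and> (zexc R \<Omega> \<le> 0 \<longrightarrow> ?f i \<le> ?s) \<and>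
      ereal (\<nu> i) \<le> \<bar>pk (R i) - ereal ?s\<bar>" if "i \<in> Nminus R \<Omega>" for i
    unfolding \<nu>_def using Nminus_between_share_peak[OF that] between that by blast
  then have "(\<forall>j\<in>Nminus R \<Omega>. 0 \<le> ?f j - ?s) \<or> (\<forall>j\<in>Nminus R \<Omega>. ?f j - ?s \<le> 0)"
    by (cases "zexc R \<Omega> \<ge> 0") auto
  then have sum_\<nu>: "(\<Sum>j\<in>Nminus R \<Omega>. \<nu> j) = \<bar>\<Sum>j\<in>Nminus R \<Omega>. ?f j - ?s\<bar>"
    unfolding \<nu>_def by (simp add: abs_sum_eq_sum_abs_if_same_sign)
  have "(\<Sum>j\<in>UNIV. ?f j) = \<Omega>"
    using rule econ unfolding is_rule_def by blast
  then have Eexc: "ereal (\<Sum>j\<in>Nminus R \<Omega>. \<nu> j) = Eexc R \<Omega>"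
    using peaks by (simp add: sum_\<nu> Eexc_eq_abs_sum_deviation)
  have "simple_deviation \<phi> R \<Omega> \<nu>"
    unfolding simple_deviation_def
    by (intro conjI impI ballI Eexc) (auto simp: peaks \<nu>_def dest: deviation)
  then show "\<exists>\<nu>. simple_deviation \<phi> R \<Omega> \<nu>" by blast
qed

theorem lemma1:
  fixes \<phi> :: "('n::finite \<Rightarrow> pref) \<Rightarrow> real \<Rightarrow> 'n \<Rightarrow> real"
  assumes "is_rule \<phi>" and "own_peak_only \<phi>"
  shows "simple_rule \<phi> \<longleftrightarrow>
    (\<forall>R \<Omega>. economy R \<Omega> \<longrightarrow>
       (\<forall>i\<in>Nplus R \<Omega>. ereal (\<phi> R \<Omega> i) = pk (R i)) \<and>
       (\<forall>i\<in>Nminus R \<Omega>.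
          min (ereal (share \<Omega> TYPE('n))) (pk (R i)) \<le> ereal (\<phi> R \<Omega> i) \<and>
          ereal (\<phi> R \<Omega> i) \<le> max (ereal (share \<Omega> TYPE('n))) (pk (R i))))"
  using simple_rule_bounds simple_ruleI[OF assms] by blast

end
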